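(* Let $X$ be a real Hilbert space, let $A,B\colon X\rightrightarrows X$ be maximally monotone, let $T:=T_{(A,B)}$, $v:=P_{\overline{\operatorname{ran}}(\mathrm{Id}-T)}0$. Then: (i) $Z_v=J_{-v+A}(\operatorname{Fix}(T_{-v}))=J_A(\operatorname{Fix}(T_{-v})+v)=J_A(\operatorname{Fix}(v+T))$; (ii) $K_v=(\mathrm{Id}-J_{-v+A})(\operatorname{Fix}(T_{-v}))$; (iii) $K_v\neq\varnothing\iff Z_v\neq\varnothing\iff v\in\operatorname{ran}(\mathrm{Id}-T)$.
   Context: $J_A:=(\mathrm{Id}+A)^{-1}$ is the resolvent, $R_A:=2J_A-\mathrm{Id}$, and the Douglas–Rachford operator is $T_{(A,B)}:=\tfrac12(\mathrm{Id}+R_BR_A)=\mathrm{Id}-J_A+J_BR_A$. For an operator $C$ and $w\in X$: $C^{\vee}:=(-\mathrm{Id})\circ C\circ(-\mathrm{Id})$, $C^{-\vee}:=(C^{-1})^\vee$. The normal pair is $({}_vA,B_v)$ with ${}_vA:=-v+A$ (i.e. $x\mapsto Ax-v$) and $B_v:=B(\cdot-v)$. The set of normal solutions is $Z_v:=({}_vA+B_v)^{-1}(0)$ and the set of dual normal solutions is $K_v:=(({}_vA)^{-1}+(B_v)^{-\vee})^{-1}(0)$. $T_{-v}x:=T(x+v)$, $(v+T)x:=v+Tx$, $\operatorname{Fix}$ is the fixed point set, and $\overline{\operatorname{ran}}$ denotes closure of the range. *)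

theory Defs
  imports "HOL-Analysis.Analysis"
begin

text \<open>Set-valued operators X \<rightrightarrows> X are represented as functions 'a \<Rightarrow> 'a set.\<close>

definition mono_op :: "('a::real_inner \<Rightarrow> 'a set) \<Rightarrow> bool" where
  "mono_op A \<longleftrightarrow> (\<forall>x y u w. u \<in> A x \<longrightarrow> w \<in> A y \<longrightarrow> inner (x - y) (u - w) \<ge> 0)"

definition max_mono_op :: "('a::real_inner \<Rightarrow> 'a set) \<Rightarrow> bool" where
  "max_mono_op A \<longleftrightarrow> mono_op A \<and>
     (\<forall>B. mono_op B \<and> (\<forall>x. A x \<subseteq> B x) \<longrightarrow> B = A)"

text \<open>Resolvent J_A = (Id + A)^{-1}: J_A x is the (unique, for maximally monotone A) y with x \<in> y + A y.\<close>
definition resolvent :: "('a::real_inner \<Rightarrow> 'a set) \<Rightarrow> 'a \<Rightarrow> 'a" where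
  "resolvent A x = (THE y. x - y \<in> A y)"

definition reflected_resolvent :: "('a::real_inner \<Rightarrow> 'a set) \<Rightarrow> 'a \<Rightarrow> 'a" where
  "reflected_resolvent A x = 2 *\<^sub>R resolvent A x - x"

definition DR_op :: "('a::real_inner \<Rightarrow> 'a set) \<Rightarrow> ('a \<Rightarrow> 'a set) \<Rightarrow> 'a \<Rightarrow> 'a" where
  "DR_op A B x = x - resolvent A x + resolvent B (reflected_resolvent A x)"

definition proj :: "'a::real_normed_vector set \<Rightarrow> 'a \<Rightarrow> 'a" where
  "proj S x = (THE p. p \<in> S \<and> (\<forall>y\<in>S. norm (x - p) \<le> norm (x - y)))"

definition op_inv :: "('a \<Rightarrow> 'b set) \<Rightarrow> 'b \<Rightarrow> 'a set" where
  "op_inv C u = {x. u \<in> C x}"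

definition op_vee :: "('a::ab_group_add \<Rightarrow> 'a set) \<Rightarrow> 'a \<Rightarrow> 'a set" where
  "op_vee C x = uminus ` C (- x)"

definition op_sum :: "('a \<Rightarrow> 'b::plus set) \<Rightarrow> ('a \<Rightarrow> 'b set) \<Rightarrow> 'a \<Rightarrow> 'b set" where
  "op_sum C D x = {c + d | c d. c \<in> C x \<and> d \<in> D x}"

text \<open>Left shift  _vA := -v + A, i.e. x \<mapsto> A x - v.\<close>
definition lshift :: "'a::ab_group_add \<Rightarrow> ('a \<Rightarrow> 'a set) \<Rightarrow> 'a \<Rightarrow> 'a set" where
  "lshift v A x = (\<lambda>u. u - v) ` A x"

definition rshift :: "('a::ab_group_add \<Rightarrow> 'a set) \<Rightarrow> 'a \<Rightarrow> 'a \<Rightarrow> 'a set" where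
  "rshift B v x = B (x - v)"

definition normal_solutions :: "('a::ab_group_add \<Rightarrow> 'a set) \<Rightarrow> ('a \<Rightarrow> 'a set) \<Rightarrow> 'a \<Rightarrow> 'a set" where
  "normal_solutions A B v = op_inv (op_sum (lshift v A) (rshift B v)) 0"

definition dual_normal_solutions :: "('a::ab_group_add \<Rightarrow> 'a set) \<Rightarrow> ('a \<Rightarrow> 'a set) \<Rightarrow> 'a \<Rightarrow> 'a set" where
  "dual_normal_solutions A B v =
     op_inv (op_sum (op_inv (lshift v A)) (op_vee (op_inv (rshift B v)))) 0"

definition Fix :: "('a \<Rightarrow> 'a) \<Rightarrow> 'a set" where
  "Fix T = {x. T x = x}"

end

theory Submission
  imports Defs
begin

text \<open>
  Everything rests on Minty's theorem: for maximally monotone A every w can be written as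
  x + a with a \<in> A x, so the resolvent J_A satisfies x - J_A x \<in> A (J_A x). The pair (x, w - x)
  is monotonically related to a point (y, b) of the graph of A exactly when x lies in the closed
  ball with centre (y + w - b)/2 and radius |y - w + b|/2. Finitely many of these balls meet:
  minimise the largest of the quadratics |x - c|^2 - r^2 over the convex hull of the centres; the
  minimiser is a convex combination of the active centres, and there monotonicity makes the
  weighted value nonpositive. In a Hilbert space closed convex sets with the finite intersection
  property, one of them bounded, have a common point x, and maximality puts w - x into A x.

  With resolvents available, y is a fixed point of v + T iff a := y - J_A y and z := J_A y satisfy
  a \<in> A z and v - a \<in> B (z - v). Hence y \<mapsto> J_A y and y \<mapsto> y - J_A y - v map Fix (v + T) onto
  the normal and the dual normal solutions, and Fix (v + T) = Fix (T (\<cdot> + v)) + v.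
\<close>

section \<open>Closed convex sets in Hilbert space\<close>

definition inf_sq_norm :: "'a::real_normed_vector set \<Rightarrow> real" where
  "inf_sq_norm S = Inf ((\<lambda>x. (norm x)\<^sup>2) ` S)"

lemma bdd_below_sq_norm: "bdd_below ((\<lambda>x. (norm x)\<^sup>2) ` S)"
  by (rule bdd_belowI[of _ 0]) auto

lemma inf_sq_norm_le: "x \<in> S \<Longrightarrow> inf_sq_norm S \<le> (norm x)\<^sup>2"
  unfolding inf_sq_norm_def by (intro cInf_lower bdd_below_sq_norm) auto

lemma inf_sq_norm_approx:
  assumes "S \<noteq> {}" "0 < \<epsilon>"
  shows "\<exists>x\<in>S. (norm x)\<^sup>2 < inf_sq_norm S + \<epsilon>"
proof -
  have "inf_sq_norm S < inf_sq_norm S + \<epsilon>" using assms(2) by simp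
  then show ?thesis
    using assms(1) bdd_below_sq_norm[of S] unfolding inf_sq_norm_def
    by (subst (asm) cInf_less_iff) auto
qed

lemma inf_sq_norm_antimono: "S \<noteq> {} \<Longrightarrow> S \<subseteq> T \<Longrightarrow> inf_sq_norm T \<le> inf_sq_norm S"
  unfolding inf_sq_norm_def by (intro cInf_superset_mono bdd_below_sq_norm) auto

lemma convex_near_minimal_norm_diff:
  fixes S :: "'a::real_inner set"
  assumes "convex S" "x \<in> S" "z \<in> S"
    and "(norm x)\<^sup>2 \<le> inf_sq_norm S + \<epsilon>" "(norm z)\<^sup>2 \<le> inf_sq_norm S + \<epsilon>"
  shows "(norm (x - z))\<^sup>2 \<le> 4 * \<epsilon>"
proof -
  have "(1 - 1/2) *\<^sub>R x + (1/2) *\<^sub>R z \<in> S" by (rule convexD_alt[OF assms(1-3)]) auto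
  then have "inf_sq_norm S \<le> (norm ((1/2) *\<^sub>R (x + z)))\<^sup>2"
    by (simp add: inf_sq_norm_le scaleR_add_right)
  also have "\<dots> = (1/4) * (norm (x + z))\<^sup>2" by (simp add: power_mult_distrib power2_eq_square)
  finally have "4 * inf_sq_norm S \<le> (norm (x + z))\<^sup>2" by simp
  moreover have "(norm (x - z))\<^sup>2 + (norm (x + z))\<^sup>2 = 2 * (norm x)\<^sup>2 + 2 * (norm z)\<^sup>2"
    unfolding power2_norm_eq_inner by (simp add: inner_add inner_diff inner_commute)
  ultimately show ?thesis using assms(4,5) by linarith
qed

lemma Cauchy_if_dist_le_null:
  fixes x :: "nat \<Rightarrow> 'a::metric_space"
  assumes dist: "\<And>m n. m \<le> n \<Longrightarrow> dist (x m) (x n) \<le> \<delta> m" and "\<delta> \<longlonglongrightarrow> 0"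
  shows "Cauchy x"
proof (rule metric_CauchyI)
  fix \<epsilon> :: real assume "0 < \<epsilon>"
  then have "\<forall>\<^sub>F n in sequentially. \<delta> n < \<epsilon> / 2"
    using \<open>\<delta> \<longlonglongrightarrow> 0\<close> by (intro order_tendstoD(2)) auto
  then obtain M where M: "\<delta> M < \<epsilon> / 2" by (auto simp: eventually_sequentially)
  have "dist (x m) (x n) < \<epsilon>" if "M \<le> m" "M \<le> n" for m n
    using dist_triangle3[of "x m" "x n" "x M"] dist[OF that(1)] dist[OF that(2)] M by linarith
  then show "\<exists>M. \<forall>m\<ge>M. \<forall>n\<ge>M. dist (x m) (x n) < \<epsilon>" by blast
qed

lemma mono_bounded_on_finite_subsets_almost_max:
  fixes m :: "'a set \<Rightarrow> real"
  assumes mono: "\<And>\<F> \<G>. \<F> \<subseteq> \<G> \<Longrightarrow> finite \<G> \<Longrightarrow> \<G> \<subseteq> \<C> \<Longrightarrow> m \<F> \<le> m \<G>"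
    and bdd: "\<And>\<F>. finite \<F> \<Longrightarrow> \<F> \<subseteq> \<C> \<Longrightarrow> m \<F> \<le> B"
    and e: "\<And>n. 0 < e n"
  obtains H where "\<And>n. finite (H n)" "\<And>n. H n \<subseteq> \<C>" "incseq H"
    "\<And>n \<F>. H n \<subseteq> \<F> \<Longrightarrow> finite \<F> \<Longrightarrow> \<F> \<subseteq> \<C> \<Longrightarrow> m \<F> < m (H n) + e n"
proof -
  define Fin where "Fin = {\<F>. finite \<F> \<and> \<F> \<subseteq> \<C>}"
  define r where "r = Sup (m ` Fin)"
  have "{} \<in> Fin" by (simp add: Fin_def)
  have bdd_m: "bdd_above (m ` Fin)" using bdd by (intro bdd_aboveI[of _ B]) (auto simp: Fin_def)
  have "\<exists>\<F>\<in>Fin. r - e n < m \<F>" for n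
    using e[of n] \<open>{} \<in> Fin\<close> bdd_m unfolding r_def by (subst less_cSUP_iff[symmetric]) auto
  then obtain G where G: "\<And>n. G n \<in> Fin" "\<And>n. r - e n < m (G n)" by metis
  define H where "H n = (\<Union>k\<le>n. G k)" for n
  show thesis
  proof
    show H_fin: "finite (H n)" and H_sub: "H n \<subseteq> \<C>" for n
      using G(1) by (auto simp: H_def Fin_def)
    show "incseq H" unfolding H_def by (intro monoI UN_mono) auto
    fix n \<F> assume "H n \<subseteq> \<F>" "finite \<F>" "\<F> \<subseteq> \<C>"
    then have "m \<F> \<le> r" unfolding r_def using bdd_m by (intro cSUP_upper) (auto simp: Fin_def)
    moreover have "m (G n) \<le> m (H n)" using H_fin H_sub by (intro mono) (auto simp: H_def)
    ultimately show "m \<F> < m (H n) + e n" using G(2)[of n] by linarith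
  qed
qed

text \<open>A substitute for weak compactness: points of almost minimal norm in ever larger
  finite intersections form a Cauchy sequence.\<close>
lemma closed_convex_fip_Inter_nonempty:
  fixes \<C> :: "'a::{real_inner,complete_space} set set"
  assumes closed: "\<And>C. C \<in> \<C> \<Longrightarrow> closed C" and convex: "\<And>C. C \<in> \<C> \<Longrightarrow> convex C"
    and C0: "C0 \<in> \<C>" "bounded C0"
    and fip: "\<And>\<F>. finite \<F> \<Longrightarrow> \<F> \<subseteq> \<C> \<Longrightarrow> \<F> \<noteq> {} \<Longrightarrow> \<Inter>\<F> \<noteq> {}"
  shows "\<Inter>\<C> \<noteq> {}"
proof -
  define D where "D \<F> = \<Inter>(insert C0 \<F>)" for \<F>
  obtain R where R: "\<And>x. x \<in> C0 \<Longrightarrow> norm x \<le> R" using C0(2) by (auto simp: bounded_iff)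
  have D_ne: "D \<F> \<noteq> {}" if "finite \<F>" "\<F> \<subseteq> \<C>" for \<F>
    using that C0 fip[of "insert C0 \<F>"] by (simp add: D_def)
  have D_convex: "convex (D \<F>)" if "\<F> \<subseteq> \<C>" for \<F>
    unfolding D_def using that C0 by (intro convex_Inter) (auto simp: convex)
  have D_anti: "D \<G> \<subseteq> D \<F>" if "\<F> \<subseteq> \<G>" for \<F> \<G> using that by (auto simp: D_def)
  have "inf_sq_norm (D \<F>) \<le> R\<^sup>2" if \<F>: "finite \<F>" "\<F> \<subseteq> \<C>" for \<F>
  proof -
    obtain x where "x \<in> D \<F>" using D_ne[OF \<F>] by auto
    moreover from this have "norm x \<le> R" using R by (auto simp: D_def)
    ultimately show ?thesis
      using inf_sq_norm_le[of x "D \<F>"] power_mono[of "norm x" R 2] by simp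
  qed
  moreover define e where "e n = (inverse (real (Suc n)))\<^sup>2" for n
  moreover have e_pos: "0 < e n" for n by (simp add: e_def)
  ultimately obtain H where H: "\<And>n. finite (H n)" "\<And>n. H n \<subseteq> \<C>" "incseq H"
    and H_max: "\<And>n \<F>. H n \<subseteq> \<F> \<Longrightarrow> finite \<F> \<Longrightarrow> \<F> \<subseteq> \<C> \<Longrightarrow>
      inf_sq_norm (D \<F>) < inf_sq_norm (D (H n)) + e n"
    using mono_bounded_on_finite_subsets_almost_max[of \<C> "\<lambda>\<F>. inf_sq_norm (D \<F>)"]
    by (metis D_anti D_ne inf_sq_norm_antimono)
  have "\<exists>y\<in>D (H n). (norm y)\<^sup>2 < inf_sq_norm (D (H n)) + e n" for n
    using H by (intro inf_sq_norm_approx D_ne e_pos)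
  then obtain x where x: "\<And>n. x n \<in> D (H n)" "\<And>n. (norm (x n))\<^sup>2 < inf_sq_norm (D (H n)) + e n"
    by metis
  have close: "norm (x n - z) \<le> 3 * inverse (real (Suc n))"
    if "H n \<subseteq> \<F>" "finite \<F>" "\<F> \<subseteq> \<C>" "z \<in> D \<F>" "(norm z)\<^sup>2 < inf_sq_norm (D \<F>) + e n"
    for n \<F> z
  proof -
    have "(norm (x n - z))\<^sup>2 \<le> 4 * (2 * e n)"
      using H_max[OF that(1-3)] x[of n] e_pos[of n] D_anti[OF that(1)] that(4,5)
      by (intro convex_near_minimal_norm_diff[OF D_convex[OF H(2)] x(1)]) auto
    also have "\<dots> \<le> (3 * inverse (real (Suc n)))\<^sup>2" by (simp add: e_def power_mult_distrib)
    finally show ?thesis by (rule power2_le_imp_le) simp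
  qed
  have \<delta>_null: "(\<lambda>n. 3 * inverse (real (Suc n))) \<longlonglongrightarrow> 0"
    using tendsto_mult_right_zero[OF LIMSEQ_inverse_real_of_nat, of 3] by simp
  have "Cauchy x"
  proof (rule Cauchy_if_dist_le_null[OF _ \<delta>_null])
    fix m n :: nat assume "m \<le> n"
    moreover have "e n \<le> e m" unfolding e_def using \<open>m \<le> n\<close> by (intro power_mono le_imp_inverse_le) auto
    ultimately show "dist (x m) (x n) \<le> 3 * inverse (real (Suc m))"
      using close[OF monoD[OF H(3)] H(1,2) x(1)] x(2)[of n] by (simp add: dist_norm)
  qed
  then obtain L where L: "x \<longlonglongrightarrow> L" using Cauchy_convergent_iff convergent_def by blast
  have "L \<in> C" if "C \<in> \<C>" for C
  proof -
    have "\<exists>y\<in>D (insert C (H n)). (norm y)\<^sup>2 < inf_sq_norm (D (insert C (H n))) + e n" for n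
      using H that by (intro inf_sq_norm_approx D_ne e_pos) auto
    then obtain z where z: "\<And>n. z n \<in> D (insert C (H n))"
      "\<And>n. (norm (z n))\<^sup>2 < inf_sq_norm (D (insert C (H n))) + e n"
      by metis
    have "norm (x n - z n) \<le> 3 * inverse (real (Suc n))" for n
      using H that by (intro close[OF _ _ _ z(1) z(2)]) auto
    then have "(\<lambda>n. x n - z n) \<longlonglongrightarrow> 0"
      by (intro Lim_null_comparison[OF _ \<delta>_null] always_eventually) blast
    then have "z \<longlonglongrightarrow> L" using tendsto_diff[OF L] by force
    moreover have "z n \<in> C" for n using z(1)[of n] by (simp add: D_def)
    ultimately show ?thesis using closed_sequentially[OF closed[OF that]] by blast
  qed
  then show ?thesis by blast
qed

lemma continuous_on_Max:
  fixes f :: "'p \<Rightarrow> 'a::topological_space \<Rightarrow> 'b::linorder_topology"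
  assumes "finite P" "P \<noteq> {}" "\<And>p. p \<in> P \<Longrightarrow> continuous_on S (f p)"
  shows "continuous_on S (\<lambda>x. Max ((\<lambda>p. f p x) ` P))"
  using assms
proof (induction P rule: finite_ne_induct)
  case (insert p P)
  then show ?case by (simp add: Max_insert continuous_on_max)
qed simp

lemma power2_norm_add_scaleR:
  fixes a d :: "'a::real_inner"
  shows "(norm (a + t *\<^sub>R d))\<^sup>2 = (norm a)\<^sup>2 + 2 * t * inner a d + t\<^sup>2 * (norm d)\<^sup>2"
  unfolding power2_norm_eq_inner by (simp add: inner_add inner_commute algebra_simps power2_eq_square)

text \<open>Along d the active quadratics decrease at rate (2 - t) t |d|^2, the others stay below m
  by continuity.\<close>
lemma small_step_below_max_sq_dist:
  fixes P :: "'p set" and c :: "'p \<Rightarrow> 'a::real_inner" and \<rho> :: "'p \<Rightarrow> real"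
  defines "g \<equiv> \<lambda>p x. (norm (x - c p))\<^sup>2 - \<rho> p"
  assumes "finite P" and le_m: "\<And>p. p \<in> P \<Longrightarrow> g p x0 \<le> m"
    and descent: "\<And>p. p \<in> P \<Longrightarrow> g p x0 = m \<Longrightarrow> inner (x0 - c p) d \<le> - (norm d)\<^sup>2"
    and "d \<noteq> 0"
  obtains t where "0 < t" "t < 1" "\<And>p. p \<in> P \<Longrightarrow> g p (x0 + t *\<^sub>R d) < m"
proof -
  have expand: "g p (x0 + t *\<^sub>R d) = g p x0 + 2 * t * inner (x0 - c p) d + t\<^sup>2 * (norm d)\<^sup>2" for p t
    using power2_norm_add_scaleR[of "x0 - c p" t d] by (simp add: g_def algebra_simps)
  have "\<forall>\<^sub>F t in at_right 0. g p (x0 + t *\<^sub>R d) < m" if "p \<in> P" for p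
  proof (cases "g p x0 = m")
    case True
    have "g p (x0 + t *\<^sub>R d) < m" if "0 < t" "t < 1" for t
    proof -
      have "t * inner (x0 - c p) d \<le> t * - (norm d)\<^sup>2"
        using descent[OF \<open>p \<in> P\<close> True] that by (intro mult_left_mono) auto
      then have "g p (x0 + t *\<^sub>R d) \<le> m - t * (2 - t) * (norm d)\<^sup>2"
        using expand[of p t] True by (simp add: power2_eq_square algebra_simps)
      also have "\<dots> < m" using that \<open>d \<noteq> 0\<close> by simp
      finally show ?thesis .
    qed
    then show ?thesis
      unfolding eventually_at_right[OF zero_less_one] by (intro exI[of _ 1]) auto
  next
    case False
    then have "g p x0 < m" using le_m[OF that] by simp
    moreover have "((\<lambda>t. g p (x0 + t *\<^sub>R d)) \<longlongrightarrow> g p x0) (at_right 0)"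
      unfolding expand by (auto intro!: tendsto_eq_intros)
    ultimately show ?thesis by (simp add: order_tendstoD(2))
  qed
  moreover have "\<forall>\<^sub>F t in at_right 0. t < (1::real)"
    unfolding eventually_at_right[OF zero_less_one] by (intro exI[of _ 1]) auto
  ultimately have "\<forall>\<^sub>F t in at_right 0. (\<forall>p\<in>P. g p (x0 + t *\<^sub>R d) < m) \<and> 0 < t \<and> t < 1"
    using \<open>finite P\<close> by (intro eventually_conj eventually_ball_finite eventually_at_right_less) auto
  then show thesis
    using that by (auto dest: eventually_happens simp: trivial_limit_at_right_real)
qed

text \<open>Otherwise a small step from x0 towards the nearest point of the active hull lowers the maximum.\<close>
lemma max_sq_dist_minimiser_in_active_hull:
  fixes P :: "'p set" and c :: "'p \<Rightarrow> 'a::real_inner" and \<rho> :: "'p \<Rightarrow> real"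
  defines "g \<equiv> \<lambda>p x. (norm (x - c p))\<^sup>2 - \<rho> p"
  defines "F \<equiv> \<lambda>x. Max ((\<lambda>p. g p x) ` P)"
  assumes P: "finite P" and x0: "x0 \<in> convex hull (c ` P)"
    and min: "\<And>x. x \<in> convex hull (c ` P) \<Longrightarrow> F x0 \<le> F x"
  shows "x0 \<in> convex hull (c ` {p \<in> P. g p x0 = F x0})"
proof (rule ccontr)
  define H where "H = convex hull (c ` {p \<in> P. g p x0 = F x0})"
  assume "x0 \<notin> convex hull (c ` {p \<in> P. g p x0 = F x0})"
  then have x0H: "x0 \<notin> H" by (simp add: H_def)
  have "P \<noteq> {}" using x0 by auto
  have le_F: "g p x \<le> F x" if "p \<in> P" for p x
    unfolding F_def using P that by (intro Max_ge) auto
  have "F x0 \<in> (\<lambda>p. g p x0) ` P" unfolding F_def using P \<open>P \<noteq> {}\<close> by (intro Max_in) auto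
  then have "compact H" "H \<noteq> {}"
    using P by (auto simp: H_def intro!: finite_imp_compact_convex_hull)
  moreover have "continuous_on H (dist x0)" by (intro continuous_intros)
  ultimately obtain q where qH: "q \<in> H" and q_min: "\<forall>z\<in>H. dist x0 q \<le> dist x0 z"
    using continuous_attains_inf by metis
  have "inner (x0 - c p) (q - x0) \<le> - (norm (q - x0))\<^sup>2" if "p \<in> P" "g p x0 = F x0" for p
  proof -
    have "c p \<in> H" unfolding H_def using that by (simp add: hull_inc)
    then have "inner (x0 - q) (c p - q) \<le> 0"
      using any_closest_point_dot[of H] qH q_min \<open>compact H\<close>
      by (simp add: H_def compact_imp_closed)
    moreover have "inner (x0 - c p) (q - x0) = - (norm (q - x0))\<^sup>2 + inner (x0 - q) (c p - q)"
      by (simp add: power2_norm_eq_inner inner_diff inner_commute algebra_simps)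
    ultimately show ?thesis by simp
  qed
  moreover have "q - x0 \<noteq> 0" using qH x0H by auto
  ultimately obtain t where t: "0 < t" "t < 1" "\<And>p. p \<in> P \<Longrightarrow> g p (x0 + t *\<^sub>R (q - x0)) < F x0"
    using small_step_below_max_sq_dist[of P x0 c \<rho> "F x0" "q - x0"] P le_F
    unfolding g_def by blast
  have "H \<subseteq> convex hull (c ` P)" unfolding H_def by (intro hull_mono) auto
  then have "(1 - t) *\<^sub>R x0 + t *\<^sub>R q \<in> convex hull (c ` P)"
    using qH x0 t by (intro convexD_alt) auto
  then have "F x0 \<le> F (x0 + t *\<^sub>R (q - x0))" by (intro min) (simp add: algebra_simps)
  moreover have "F (x0 + t *\<^sub>R (q - x0)) < F x0"
    using P \<open>P \<noteq> {}\<close> t(3) by (subst F_def) simp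
  ultimately show False by simp
qed

section \<open>Minty's theorem\<close>

definition op_graph :: "('a \<Rightarrow> 'b set) \<Rightarrow> ('a \<times> 'b) set" where
  "op_graph A = {(x, u). u \<in> A x}"

lemma mono_op_inner_convex_combination_le:
  fixes A :: "'a::real_inner \<Rightarrow> 'a set"
  assumes "mono_op A" "finite S" "\<And>i. i \<in> S \<Longrightarrow> 0 \<le> u i" "sum u S = 1"
    and "\<And>i. i \<in> S \<Longrightarrow> b i \<in> A (y i)"
  shows "inner (\<Sum>i\<in>S. u i *\<^sub>R y i) (\<Sum>i\<in>S. u i *\<^sub>R b i) \<le> (\<Sum>i\<in>S. u i * inner (y i) (b i))"
proof -
  define s where "s = (\<Sum>i\<in>S. u i * inner (y i) (b i))"
  define m where "m = inner (\<Sum>i\<in>S. u i *\<^sub>R y i) (\<Sum>i\<in>S. u i *\<^sub>R b i)"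
  have mixed: "(\<Sum>i\<in>S. \<Sum>j\<in>S. u i * u j * inner (y j) (b i)) = m"
  proof -
    have "inner (\<Sum>i\<in>S. u i *\<^sub>R y i) z = (\<Sum>i\<in>S. u i * inner (y i) z)" for z
      by (simp add: inner_sum_left)
    then show ?thesis
      by (simp add: m_def inner_sum_right sum_distrib_left mult.assoc)
  qed
  have "0 \<le> (\<Sum>i\<in>S. \<Sum>j\<in>S. u i * u j * inner (y i - y j) (b i - b j))"
    using assms(1,3,5) unfolding mono_op_def by (intro sum_nonneg) simp
  also have "\<dots> = (\<Sum>i\<in>S. \<Sum>j\<in>S. u i * u j * inner (y i) (b i))
      + (\<Sum>i\<in>S. \<Sum>j\<in>S. u i * u j * inner (y j) (b j))
      - (\<Sum>i\<in>S. \<Sum>j\<in>S. u i * u j * inner (y i) (b j))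
      - (\<Sum>i\<in>S. \<Sum>j\<in>S. u i * u j * inner (y j) (b i))"
    by (simp add: inner_diff sum_subtractf sum.distrib algebra_simps)
  also have "\<dots> = 2 * s - 2 * m"
  proof -
    have diag: "(\<Sum>i\<in>S. \<Sum>j\<in>S. u i * u j * inner (y i) (b i)) = s"
      by (simp add: s_def sum_distrib_left[symmetric] sum_distrib_right[symmetric] assms(4) mult.commute)
    have "(\<Sum>i\<in>S. \<Sum>j\<in>S. u i * u j * inner (y j) (b j)) = s"
      using diag by (subst sum.swap) (simp add: mult.commute)
    moreover have "(\<Sum>i\<in>S. \<Sum>j\<in>S. u i * u j * inner (y i) (b j)) = m"
      using mixed by (subst sum.swap) (simp add: mult.commute)
    ultimately show ?thesis using diag mixed by simp
  qed
  finally show ?thesis by (simp add: s_def m_def)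
qed

definition minty_centre :: "'a::real_vector \<Rightarrow> 'a \<Rightarrow> 'a \<Rightarrow> 'a" where
  "minty_centre w y b = (1/2) *\<^sub>R (y + w - b)"

definition minty_radius :: "'a::real_normed_vector \<Rightarrow> 'a \<Rightarrow> 'a \<Rightarrow> real" where
  "minty_radius w y b = norm (y - w + b) / 2"

lemma inner_minty_eq:
  "inner (x - y) ((w - x) - b) = (minty_radius w y b)\<^sup>2 - (norm (x - minty_centre w y b))\<^sup>2"
proof -
  define a c where "a = x - y" and "c = x - w + b"
  have centre: "x - minty_centre w y b = (1/2) *\<^sub>R (a + c)"
    by (simp add: a_def c_def minty_centre_def algebra_simps) (simp flip: scaleR_add_left)
  have "c - a = y - w + b" by (simp add: a_def c_def)
  then have radius: "minty_radius w y b = norm ((1/2) *\<^sub>R (c - a))"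
    by (simp only: minty_radius_def norm_scaleR)
  have gap: "(w - x) - b = - c" by (simp add: c_def)
  show ?thesis unfolding centre radius gap a_def[symmetric]
    by (simp add: power2_norm_eq_inner inner_add inner_diff inner_commute algebra_simps)
qed

lemma mem_cball_minty_iff:
  "x \<in> cball (minty_centre w y b) (minty_radius w y b) \<longleftrightarrow> 0 \<le> inner (x - y) ((w - x) - b)"
proof -
  have "0 \<le> minty_radius w y b" by (simp add: minty_radius_def)
  then show ?thesis
    by (simp add: inner_minty_eq dist_norm norm_minus_commute abs_le_square_iff[symmetric])
qed

text \<open>With y' and b' the weighted means of the y_i and b_i, the weighted gap at the barycentre
  x is |x - y'|^2 plus the monotonicity defect \<Sum> u_i \<langle>y_i, b_i\<rangle> - \<langle>y', b'\<rangle>.\<close>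
lemma mono_op_inner_minty_barycentre_ge:
  fixes A :: "'a::real_inner \<Rightarrow> 'a set"
  assumes "mono_op A" "finite S" "\<And>i. i \<in> S \<Longrightarrow> 0 \<le> u i" "sum u S = 1"
    and "\<And>i. i \<in> S \<Longrightarrow> b i \<in> A (y i)"
    and x: "x = (\<Sum>i\<in>S. u i *\<^sub>R minty_centre w (y i) (b i))"
  shows "0 \<le> (\<Sum>i\<in>S. u i * inner (x - y i) ((w - x) - b i))"
proof -
  define ym where "ym = (\<Sum>i\<in>S. u i *\<^sub>R y i)"
  define bm where "bm = (\<Sum>i\<in>S. u i *\<^sub>R b i)"
  have avg: "(\<Sum>i\<in>S. u i *\<^sub>R z) = z" for z :: 'a
    by (simp add: scaleR_sum_left[symmetric] assms(4))
  have "x = (1/2) *\<^sub>R (\<Sum>i\<in>S. u i *\<^sub>R (y i + w - b i))"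
    by (simp add: x minty_centre_def scaleR_sum_right)
  also have "\<dots> = (1/2) *\<^sub>R (ym + w - bm)"
    by (simp add: ym_def bm_def avg scaleR_add_right scaleR_diff_right sum.distrib sum_subtractf)
  finally have "x + x = ym + w - bm"
    by (simp flip: scaleR_add_left)
  then have "x - ym = (w - x) - bm"
    by (simp add: algebra_simps)
  have "(\<Sum>i\<in>S. u i * inner (x - y i) ((w - x) - b i))
      = inner (x - ym) ((w - x) - bm) + ((\<Sum>i\<in>S. u i * inner (y i) (b i)) - inner ym bm)"
    by (simp add: ym_def bm_def inner_diff inner_sum_left inner_sum_right right_diff_distrib
        sum_subtractf sum_distrib_right[symmetric] assms(4) sum_distrib_left[symmetric])
  moreover have "inner ym bm \<le> (\<Sum>i\<in>S. u i * inner (y i) (b i))"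
    unfolding ym_def bm_def by (rule mono_op_inner_convex_combination_le[OF assms(1-5)])
  ultimately show ?thesis using \<open>x - ym = (w - x) - bm\<close> by simp
qed

lemma mono_op_finite_minty_point:
  fixes A :: "'a::real_inner \<Rightarrow> 'a set"
  assumes mono: "mono_op A" and P: "finite P" "P \<subseteq> op_graph A"
  shows "\<exists>x. \<forall>(y, b)\<in>P. 0 \<le> inner (x - y) ((w - x) - b)"
proof (cases "P = {}")
  case False
  define c where "c p = minty_centre w (fst p) (snd p)" for p
  define \<rho> where "\<rho> p = (minty_radius w (fst p) (snd p))\<^sup>2" for p
  define g where "g p x = (norm (x - c p))\<^sup>2 - \<rho> p" for p x
  define F where "F x = Max ((\<lambda>p. g p x) ` P)" for x
  have gap: "inner (x - fst p) ((w - x) - snd p) = - g p x" for p x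
    by (simp add: g_def c_def \<rho>_def inner_minty_eq)
  have "continuous_on (convex hull (c ` P)) F"
    unfolding F_def g_def using P False by (intro continuous_on_Max continuous_intros) auto
  moreover have "compact (convex hull (c ` P))" "convex hull (c ` P) \<noteq> {}"
    using P False by (auto intro: finite_imp_compact_convex_hull)
  ultimately obtain x0 where x0: "x0 \<in> convex hull (c ` P)"
    and min: "\<And>x. x \<in> convex hull (c ` P) \<Longrightarrow> F x0 \<le> F x"
    using continuous_attains_inf by metis
  define I where "I = {p \<in> P. g p x0 = F x0}"
  have "x0 \<in> convex hull (c ` I)"
    using max_sq_dist_minimiser_in_active_hull[of P x0 c \<rho>] P x0 min
    by (simp add: I_def g_def[abs_def] F_def[abs_def])
  then obtain u where u: "\<forall>z\<in>c ` I. 0 \<le> u z" "sum u (c ` I) = 1" "(\<Sum>z\<in>c ` I. u z *\<^sub>R z) = x0"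
    using P by (auto simp: I_def convex_hull_finite)
  define r where "r = inv_into I c"
  have r: "r z \<in> I" "c (r z) = z" if "z \<in> c ` I" for z
    using that by (simp_all add: r_def inv_into_into f_inv_into_f)
  have "0 \<le> (\<Sum>z\<in>c ` I. u z * inner (x0 - fst (r z)) ((w - x0) - snd (r z)))"
  proof (rule mono_op_inner_minty_barycentre_ge[OF mono])
    show "finite (c ` I)" using P by (simp add: I_def)
    show "snd (r z) \<in> A (fst (r z))" if "z \<in> c ` I" for z
      using r(1)[OF that] P(2) by (auto simp: I_def op_graph_def)
    show "x0 = (\<Sum>z\<in>c ` I. u z *\<^sub>R minty_centre w (fst (r z)) (snd (r z)))"
      using u(3) r(2) by (simp add: c_def[symmetric])
  qed (use u in auto)
  also have "\<dots> = (\<Sum>z\<in>c ` I. u z) * - F x0"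
    unfolding sum_distrib_right using r by (intro sum.cong) (simp_all add: gap I_def)
  finally have "F x0 \<le> 0"
    using u(2) by simp
  moreover have "g p x0 \<le> F x0" if "p \<in> P" for p
    unfolding F_def using P that by (intro Max_ge) auto
  ultimately show ?thesis using gap by (intro exI[of _ x0]) force
qed simp

lemma mono_op_minty_point:
  fixes A :: "'a::{real_inner,complete_space} \<Rightarrow> 'a set"
  assumes "mono_op A"
  shows "\<exists>x. \<forall>(y, b)\<in>op_graph A. 0 \<le> inner (x - y) ((w - x) - b)"
proof (cases "op_graph A = {}")
  case False
  then obtain p0 where p0: "p0 \<in> op_graph A" by blast
  define ball where "ball p = cball (minty_centre w (fst p) (snd p)) (minty_radius w (fst p) (snd p))" for p
  have "\<Inter>(ball ` op_graph A) \<noteq> {}"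
  proof (rule closed_convex_fip_Inter_nonempty)
    show "ball p0 \<in> ball ` op_graph A" "bounded (ball p0)" using p0 by (auto simp: ball_def)
    fix \<F> assume "finite \<F>" "\<F> \<subseteq> ball ` op_graph A" "\<F> \<noteq> {}"
    then obtain P where P: "finite P" "P \<subseteq> op_graph A" "\<F> = ball ` P"
      using finite_subset_image[of \<F> ball "op_graph A"] by blast
    then obtain x where "\<forall>(y, b)\<in>P. 0 \<le> inner (x - y) ((w - x) - b)"
      using mono_op_finite_minty_point[OF assms] by blast
    then have "x \<in> \<Inter>\<F>" by (auto simp: P(3) ball_def mem_cball_minty_iff simp del: mem_cball)
    then show "\<Inter>\<F> \<noteq> {}" by blast
  qed (auto simp: ball_def)
  then obtain x where x: "\<And>p. p \<in> op_graph A \<Longrightarrow> x \<in> ball p" by blast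
  have "0 \<le> inner (x - y) ((w - x) - b)" if "(y, b) \<in> op_graph A" for y b
    using x[OF that] by (simp add: ball_def mem_cball_minty_iff del: mem_cball)
  then show ?thesis by (intro exI[of _ x]) auto
qed simp

lemma mono_op_insert:
  assumes "mono_op A" and "\<forall>(y, b)\<in>op_graph A. 0 \<le> inner (x - y) (u - b)"
  shows "mono_op (\<lambda>z. if z = x then insert u (A z) else A z)"
  unfolding mono_op_def
proof (intro allI impI)
  fix z1 z2 u1 u2
  assume "u1 \<in> (if z1 = x then insert u (A z1) else A z1)" "u2 \<in> (if z2 = x then insert u (A z2) else A z2)"
  then consider "u1 \<in> A z1" "u2 \<in> A z2" | "z1 = x" "u1 = u" "u2 \<in> A z2"
    | "u1 \<in> A z1" "z2 = x" "u2 = u" | "z1 = x" "u1 = u" "z2 = x" "u2 = u"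
    by (auto split: if_splits)
  then show "0 \<le> inner (z1 - z2) (u1 - u2)"
  proof cases
    case 1
    then show ?thesis using assms(1) by (simp add: mono_op_def)
  next
    case 2
    then show ?thesis using assms(2) by (auto simp: op_graph_def)
  next
    case 3
    then have "0 \<le> inner (x - z1) (u - u1)" using assms(2) by (auto simp: op_graph_def)
    then show ?thesis using 3 by (simp add: inner_diff_left inner_diff_right algebra_simps)
  qed simp
qed

theorem Minty:
  fixes A :: "'a::{real_inner,complete_space} \<Rightarrow> 'a set"
  assumes "max_mono_op A"
  shows "\<exists>x. w - x \<in> A x"
proof -
  have "mono_op A" and max: "\<And>B. mono_op B \<Longrightarrow> (\<And>z. A z \<subseteq> B z) \<Longrightarrow> B = A"
    using assms unfolding max_mono_op_def by blast+
  obtain x where "\<forall>(y, b)\<in>op_graph A. 0 \<le> inner (x - y) ((w - x) - b)"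
    using mono_op_minty_point[OF \<open>mono_op A\<close>] by blast
  then have "(\<lambda>z. if z = x then insert (w - x) (A z) else A z) = A"
    by (intro max mono_op_insert[OF \<open>mono_op A\<close>]) auto
  from fun_cong[OF this, of x] show ?thesis by auto
qed

section \<open>Resolvents and the Douglas--Rachford operator\<close>

lemma resolvent_eqI:
  assumes "mono_op A" "x - y \<in> A y"
  shows "resolvent A x = y"
  unfolding resolvent_def
proof (rule the_equality)
  fix y' assume "x - y' \<in> A y'"
  then have "0 \<le> inner (y' - y) ((x - y') - (x - y))" using assms unfolding mono_op_def by blast
  then have "inner (y' - y) (y' - y) \<le> 0" by (simp add: inner_diff_right inner_commute algebra_simps)
  then show "y' = y" by (metis eq_iff_diff_eq_0 inner_eq_zero_iff inner_ge_zero order_antisym)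
qed (rule assms(2))

lemma resolvent_mem:
  fixes A :: "'a::{real_inner,complete_space} \<Rightarrow> 'a set"
  assumes "max_mono_op A"
  shows "x - resolvent A x \<in> A (resolvent A x)"
proof -
  obtain y where "x - y \<in> A y" using Minty[OF assms] by blast
  moreover from this have "resolvent A x = y"
    using assms by (intro resolvent_eqI) (auto simp: max_mono_op_def)
  ultimately show ?thesis by simp
qed

lemma resolvent_lshift: "resolvent (lshift v A) x = resolvent A (x + v)"
proof -
  have "x - y \<in> lshift v A y \<longleftrightarrow> x + v - y \<in> A y" for y
  proof
    assume "x - y \<in> lshift v A y"
    then obtain u where "u \<in> A y" "x - y = u - v" by (auto simp: lshift_def)
    then show "x + v - y \<in> A y" by (simp add: algebra_simps)
  next
    assume "x + v - y \<in> A y"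
    then show "x - y \<in> lshift v A y" unfolding lshift_def by (rule rev_image_eqI) simp
  qed
  then show ?thesis unfolding resolvent_def by simp
qed

lemma Fix_add_left_eq_image:
  fixes T :: "'a::ab_group_add \<Rightarrow> 'a"
  shows "Fix (\<lambda>x. v + T x) = (\<lambda>x. x + v) ` Fix (\<lambda>x. T (x + v))"
proof (intro equalityI subsetI)
  fix y assume "y \<in> Fix (\<lambda>x. v + T x)"
  then have "y - v \<in> Fix (\<lambda>x. T (x + v))" by (simp add: Fix_def algebra_simps)
  then show "y \<in> (\<lambda>x. x + v) ` Fix (\<lambda>x. T (x + v))" by (rule rev_image_eqI) simp
qed (auto simp: Fix_def)

lemma shifted_DR_fixpoint_iff:
  fixes A B :: "'a::{real_inner,complete_space} \<Rightarrow> 'a set"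
  assumes "max_mono_op B"
  shows "v + DR_op A B y = y \<longleftrightarrow> v - (y - resolvent A y) \<in> B (resolvent A y - v)"
proof -
  define z where "z = resolvent A y"
  have "v + DR_op A B y = y \<longleftrightarrow> resolvent B (2 *\<^sub>R z - y) = z - v"
    by (auto simp: DR_op_def reflected_resolvent_def z_def algebra_simps)
  also have "\<dots> \<longleftrightarrow> (2 *\<^sub>R z - y) - (z - v) \<in> B (z - v)"
    using resolvent_mem[OF assms] assms
    by (metis max_mono_op_def resolvent_eqI)
  also have "(2 *\<^sub>R z - y) - (z - v) = v - (y - z)" by (simp add: algebra_simps scaleR_2)
  finally show ?thesis by (simp add: z_def)
qed

lemma shifted_DR_Fix_iff:
  fixes A B :: "'a::{real_inner,complete_space} \<Rightarrow> 'a set"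
  assumes "max_mono_op A" "max_mono_op B"
  shows "y \<in> Fix (\<lambda>x. v + DR_op A B x) \<longleftrightarrow>
    (\<exists>a\<in>A (resolvent A y). y = resolvent A y + a \<and> v - a \<in> B (resolvent A y - v))"
proof -
  have "y = resolvent A y + a \<longleftrightarrow> a = y - resolvent A y" for a
    by (metis add.commute add_diff_cancel_right' diff_add_cancel)
  then show ?thesis using resolvent_mem[OF assms(1)]
    by (simp add: Fix_def shifted_DR_fixpoint_iff[OF assms(2)])
qed

lemma normal_solutions_iff:
  "z \<in> normal_solutions A B v \<longleftrightarrow> (\<exists>a\<in>A z. v - a \<in> B (z - v))"
proof
  assume "z \<in> normal_solutions A B v"
  then obtain a d where "a \<in> A z" "d \<in> B (z - v)" "0 = (a - v) + d"
    by (auto simp: normal_solutions_def op_inv_def op_sum_def lshift_def rshift_def)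
  moreover from this have "d = v - a" by (simp add: algebra_simps)
  ultimately show "\<exists>a\<in>A z. v - a \<in> B (z - v)" by blast
next
  assume "\<exists>a\<in>A z. v - a \<in> B (z - v)"
  then obtain a where "a \<in> A z" "v - a \<in> B (z - v)" by blast
  moreover have "0 = (a - v) + (v - a)" by simp
  ultimately show "z \<in> normal_solutions A B v"
    unfolding normal_solutions_def op_inv_def op_sum_def lshift_def rshift_def by blast
qed

lemma dual_normal_solutions_iff:
  "u \<in> dual_normal_solutions A B v \<longleftrightarrow> (\<exists>z. u + v \<in> A z \<and> - u \<in> B (z - v))"
proof
  assume "u \<in> dual_normal_solutions A B v"
  then obtain z z' where "z \<in> op_inv (lshift v A) u" "z' \<in> op_vee (op_inv (rshift B v)) u" "0 = z + z'"
    unfolding dual_normal_solutions_def by (auto simp: op_inv_def op_sum_def)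
  then have "u + v \<in> A z" "- u \<in> B (- z' - v)" "- z' = z"
    by (auto simp: op_inv_def lshift_def op_vee_def rshift_def eq_neg_iff_add_eq_0)
  then show "\<exists>z. u + v \<in> A z \<and> - u \<in> B (z - v)" by auto
next
  assume "\<exists>z. u + v \<in> A z \<and> - u \<in> B (z - v)"
  then obtain z where z: "u + v \<in> A z" "- u \<in> B (z - v)" by blast
  have "z \<in> op_inv (lshift v A) u"
    unfolding op_inv_def lshift_def using z(1) by (auto intro: rev_image_eqI[where x="u + v"])
  moreover have "- z \<in> op_vee (op_inv (rshift B v)) u"
    unfolding op_vee_def op_inv_def rshift_def using z(2) by auto
  moreover have "0 = z + - z" by simp
  ultimately show "u \<in> dual_normal_solutions A B v"
    unfolding dual_normal_solutions_def op_inv_def op_sum_def by blast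
qed

lemma normal_solutions_eq_resolvent_image:
  fixes A B :: "'a::{real_inner,complete_space} \<Rightarrow> 'a set"
  assumes "max_mono_op A" "max_mono_op B"
  shows "normal_solutions A B v = resolvent A ` Fix (\<lambda>x. v + DR_op A B x)"
proof (intro equalityI subsetI)
  fix z assume "z \<in> normal_solutions A B v"
  then obtain a where a: "a \<in> A z" "v - a \<in> B (z - v)" by (auto simp: normal_solutions_iff)
  then have "resolvent A (z + a) = z"
    using assms(1) by (intro resolvent_eqI) (auto simp: max_mono_op_def)
  then have "z + a \<in> Fix (\<lambda>x. v + DR_op A B x)" using a by (simp add: shifted_DR_Fix_iff[OF assms])
  then show "z \<in> resolvent A ` Fix (\<lambda>x. v + DR_op A B x)"
    using \<open>resolvent A (z + a) = z\<close> by (metis image_eqI)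
next
  fix z assume "z \<in> resolvent A ` Fix (\<lambda>x. v + DR_op A B x)"
  then show "z \<in> normal_solutions A B v"
    by (auto simp: shifted_DR_Fix_iff[OF assms] normal_solutions_iff)
qed

lemma dual_normal_solutions_eq_image:
  fixes A B :: "'a::{real_inner,complete_space} \<Rightarrow> 'a set"
  assumes "max_mono_op A" "max_mono_op B"
  shows "dual_normal_solutions A B v = (\<lambda>y. y - resolvent A y - v) ` Fix (\<lambda>x. v + DR_op A B x)"
proof (intro equalityI subsetI)
  fix u assume "u \<in> dual_normal_solutions A B v"
  then obtain z where z: "u + v \<in> A z" "- u \<in> B (z - v)" by (auto simp: dual_normal_solutions_iff)
  then have "resolvent A (z + (u + v)) = z"
    using assms(1) by (intro resolvent_eqI) (auto simp: max_mono_op_def)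
  moreover have "v - (u + v) = - u" by simp
  ultimately have "z + (u + v) \<in> Fix (\<lambda>x. v + DR_op A B x)"
    using z by (metis shifted_DR_Fix_iff[OF assms])
  moreover have "u = (z + (u + v)) - resolvent A (z + (u + v)) - v"
    using \<open>resolvent A (z + (u + v)) = z\<close> by simp
  ultimately show "u \<in> (\<lambda>y. y - resolvent A y - v) ` Fix (\<lambda>x. v + DR_op A B x)"
    by (rule rev_image_eqI)
next
  fix u assume "u \<in> (\<lambda>y. y - resolvent A y - v) ` Fix (\<lambda>x. v + DR_op A B x)"
  then obtain y a where "u = y - resolvent A y - v" "a \<in> A (resolvent A y)"
    "y = resolvent A y + a" "v - a \<in> B (resolvent A y - v)"
    by (auto simp: shifted_DR_Fix_iff[OF assms])
  moreover from this have "u + v = a" by (metis add_diff_cancel_left' diff_add_cancel)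
  moreover from this have "- u = v - a" by (simp add: algebra_simps)
  ultimately show "u \<in> dual_normal_solutions A B v"
    by (auto simp: dual_normal_solutions_iff)
qed

text \<open>The identities hold for every shift v.\<close>
theorem lemma4p1:
  fixes A B :: "'a::{real_inner, complete_space} \<Rightarrow> 'a set"
    and T :: "'a \<Rightarrow> 'a" and v :: 'a
  assumes "max_mono_op A" and "max_mono_op B"
    and "T = DR_op A B"
    and "v = proj (closure (range (\<lambda>x. x - T x))) 0"
  shows "(normal_solutions A B v = resolvent (lshift v A) ` Fix (\<lambda>x. T (x + v))
       \<and> resolvent (lshift v A) ` Fix (\<lambda>x. T (x + v)) = resolvent A ` ((\<lambda>x. x + v) ` Fix (\<lambda>x. T (x + v)))
       \<and> resolvent A ` ((\<lambda>x. x + v) ` Fix (\<lambda>x. T (x + v))) = resolvent A ` Fix (\<lambda>x. v + T x))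
       \<and> dual_normal_solutions A B v = (\<lambda>x. x - resolvent (lshift v A) x) ` Fix (\<lambda>x. T (x + v))
       \<and> (dual_normal_solutions A B v \<noteq> {} \<longleftrightarrow> normal_solutions A B v \<noteq> {})
       \<and> (normal_solutions A B v \<noteq> {} \<longleftrightarrow> v \<in> range (\<lambda>x. x - T x))"
proof -
  have Fix_shift: "Fix (\<lambda>x. v + T x) = (\<lambda>x. x + v) ` Fix (\<lambda>x. T (x + v))"
    by (rule Fix_add_left_eq_image)
  have Z: "normal_solutions A B v = resolvent A ` Fix (\<lambda>x. v + T x)"
    using normal_solutions_eq_resolvent_image[OF assms(1,2)] assms(3) by simp
  have K: "dual_normal_solutions A B v = (\<lambda>y. y - resolvent A y - v) ` Fix (\<lambda>x. v + T x)"
    using dual_normal_solutions_eq_image[OF assms(1,2)] assms(3) by simp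
  have "Fix (\<lambda>x. v + T x) \<noteq> {} \<longleftrightarrow> v \<in> range (\<lambda>x. x - T x)"
    by (auto simp: Fix_def image_iff algebra_simps)
  then show ?thesis
    unfolding Z K Fix_shift by (simp add: resolvent_lshift image_image)
qed

end
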